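(* Let $(X,d)$ be a separable metric space, $T\colon X\to X$ a Borel measurable map and $\mu$ a $T$-invariant Borel probability measure on $X$ such that $(X,T,\mu)$ is weakly mixing. Let $(s_n)_{n\ge1}$ be a scale sequence which is either monotone or steady. Then the proximality gauge $\psi(x,y)=\liminf_{n\to\infty} s_n\, d(T^nx,T^ny)$ is $\mu\times\mu$-almost everywhere constant (its push-forward of $\mu\times\mu$ is a Dirac measure on $[0,\infty]$). In particular, writing $\psi_\alpha(x,y)=\liminf_{n} n^\alpha d(T^nx,T^ny)$ and \[C_\psi=\sup\big(\{0\}\cup\{\alpha>0:\ \psi_\alpha(x,y)=0 \text{ for } \mu\times\mu\text{-a.e. }(x,y)\}\big),\] one has $\psi_\alpha=0$ $\mu\times\mu$-a.e. if $0\le\alpha<C_\psi$, and $\psi_\alpha=\infty$ $\mu\times\mu$-a.e. if $C_\psi<\alpha<\infty$.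
   Context: A scale sequence is a sequence $(s_n)_{n\ge1}$ of positive reals with $s_n\to\infty$. It is monotone if $s_{n+1}\ge s_n$ for all sufficiently large $n$, and steady if $\lim_{n\to\infty}s_{n+1}/s_n=1$. Weakly mixing means $T\times T$ is ergodic with respect to $\mu\times\mu$. *)

theory Defs
  imports "HOL-Probability.Probability"
begin

definition measure_preserving_map :: "'a measure \<Rightarrow> ('a \<Rightarrow> 'a) \<Rightarrow> bool" where
  "measure_preserving_map M f \<longleftrightarrow> f \<in> measurable M M \<and> distr M M f = M"

definition ergodic_map :: "'a measure \<Rightarrow> ('a \<Rightarrow> 'a) \<Rightarrow> bool" where
  "ergodic_map M f \<longleftrightarrow> measure_preserving_map M f \<and>
     (\<forall>A \<in> sets M. f -` A \<inter> space M = A \<longrightarrow> measure M A = 0 \<or> measure M A = 1)"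

definition weakly_mixing :: "'a measure \<Rightarrow> ('a \<Rightarrow> 'a) \<Rightarrow> bool" where
  "weakly_mixing M T \<longleftrightarrow> ergodic_map (M \<Otimes>\<^sub>M M) (\<lambda>(x, y). (T x, T y))"

text \<open>Scale sequences (indexed from 1; the value at 0 is irrelevant).\<close>
definition scale_sequence :: "(nat \<Rightarrow> real) \<Rightarrow> bool" where
  "scale_sequence s \<longleftrightarrow> (\<forall>n\<ge>1. s n > 0) \<and> filterlim s at_top sequentially"

definition monotone_scale :: "(nat \<Rightarrow> real) \<Rightarrow> bool" where
  "monotone_scale s \<longleftrightarrow> (\<forall>\<^sub>F n in sequentially. s (Suc n) \<ge> s n)"

definition steady_scale :: "(nat \<Rightarrow> real) \<Rightarrow> bool" where
  "steady_scale s \<longleftrightarrow> (\<lambda>n. s (Suc n) / s n) \<longlonglongrightarrow> 1"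

definition prox_gauge :: "(nat \<Rightarrow> real) \<Rightarrow> ('a::metric_space \<Rightarrow> 'a) \<Rightarrow> 'a \<Rightarrow> 'a \<Rightarrow> ereal" where
  "prox_gauge s T x y = liminf (\<lambda>n. ereal (s n * dist ((T ^^ n) x) ((T ^^ n) y)))"

definition prox_gauge_pow :: "real \<Rightarrow> ('a::metric_space \<Rightarrow> 'a) \<Rightarrow> 'a \<Rightarrow> 'a \<Rightarrow> ereal" where
  "prox_gauge_pow \<alpha> T = prox_gauge (\<lambda>n. real n powr \<alpha>) T"

definition crit_exponent :: "'a measure \<Rightarrow> ('a::metric_space \<Rightarrow> 'a) \<Rightarrow> ereal" where
  "crit_exponent M T = Sup (ereal ` ({0} \<union>
     {\<alpha>. \<alpha> > 0 \<and> (AE z in M \<Otimes>\<^sub>M M. prox_gauge_pow \<alpha> T (fst z) (snd z) = 0)}))"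

end

theory Submission
  imports Defs
begin

text \<open>
  Shifting a pair of points by \<open>T \<times> T\<close> can only decrease the gauge: for a monotone scale
  because \<open>s\<^sub>n \<le> s\<^sub>n\<^sub>+\<^sub>1\<close>, for a steady scale because the factor \<open>s\<^sub>n / s\<^sub>n\<^sub>+\<^sub>1\<close> tends to 1.
  A measurable function that decreases along an ergodic map has sub-invariant sublevel sets,
  each of which has measure 0 or 1, so it is almost everywhere constant; separability of \<open>X\<close>
  is what makes the gauge measurable on the product. For the power scales \<open>n\<^sup>\<alpha>\<close>, a finite gauge
  at exponent \<open>\<alpha>\<close> forces the gauge to vanish at every smaller exponent, which together with
  almost-everywhere constancy yields the dichotomy around the critical exponent.
\<close>

lemma measurable_funpow:
  assumes "f \<in> measurable M M"
  shows "f ^^ n \<in> measurable M M"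
  by (induction n) (auto intro: measurable_compose[OF _ assms])

lemma ergodic_map_subinvariant_measure_0_1:
  assumes erg: "ergodic_map P S" and A: "A \<in> sets P" and sub: "A \<subseteq> S -` A"
  shows "measure P A = 0 \<or> measure P A = 1"
proof -
  from erg have S: "S \<in> measurable P P" and S_preserving: "distr P P S = P"
    and invariant_0_1: "\<And>B. B \<in> sets P \<Longrightarrow> S -` B \<inter> space P = B \<Longrightarrow>
                              measure P B = 0 \<or> measure P B = 1"
    by (auto simp: ergodic_map_def measure_preserving_map_def)
  \<comment> \<open>The preimages \<open>S\<^sup>-\<^sup>n A\<close> increase and all have the measure of \<open>A\<close>, so their union is
      an invariant set of that measure.\<close>
  define A' where "A' n = (S ^^ n) -` A \<inter> space P" for n
  have A'_0: "A' 0 = A"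
    using sets.sets_into_space[OF A] by (auto simp: A'_def)
  have A'_Suc: "A' (Suc n) = S -` A' n \<inter> space P" for n
    using measurable_space[OF S] by (auto simp: A'_def funpow_swap1)
  have A'_sets: "A' n \<in> sets P" for n
    by (induction n) (auto simp: A'_0 A'_Suc A intro: measurable_sets[OF S])
  have A'_measure: "emeasure P (A' n) = emeasure P A" for n
  proof (induction n)
    case (Suc n)
    have "emeasure P (A' (Suc n)) = emeasure (distr P P S) (A' n)"
      by (simp add: A'_Suc emeasure_distr[OF S A'_sets])
    then show ?case using S_preserving Suc by simp
  qed (simp add: A'_0)
  have A'_inc: "incseq A'"
  proof (rule incseq_SucI)
    show "A' n \<subseteq> A' (Suc n)" for n
    proof (induction n)
      case 0
      show ?case using sub sets.sets_into_space[OF A] by (auto simp: A'_0 A'_Suc)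
    qed (auto simp: A'_Suc)
  qed
  define B where "B = (\<Union>n. A' n)"
  have B_sets: "B \<in> sets P" using A'_sets by (auto simp: B_def)
  have "S -` B \<inter> space P = (\<Union>n. A' (Suc n))" by (auto simp: B_def A'_Suc)
  also have "\<dots> = B"
    using A'_inc unfolding B_def by (auto simp: incseq_Suc_iff)
  finally have B_invariant: "S -` B \<inter> space P = B" .
  have "emeasure P B = (SUP n. emeasure P (A' n))"
    using SUP_emeasure_incseq[of A' P] A'_sets A'_inc by (simp add: B_def image_subset_iff)
  then have "measure P B = measure P A" by (simp add: A'_measure measure_def)
  then show ?thesis using invariant_0_1[OF B_sets B_invariant] by simp
qed

lemma ereal_eq_INF_rat_greater:
  fixes x :: ereal
  shows "x = (INF q\<in>{q::rat. x < ereal (of_rat q)}. ereal (of_rat q))"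
proof (rule antisym)
  show "x \<le> (INF q\<in>{q::rat. x < ereal (of_rat q)}. ereal (of_rat q))"
    by (rule INF_greatest) simp
  show "(INF q\<in>{q::rat. x < ereal (of_rat q)}. ereal (of_rat q)) \<le> x"
  proof (rule dense_ge)
    fix y assume "x < y"
    then obtain q :: rat where "x < ereal (of_rat q)" "ereal (of_rat q) < y"
      using ereal_dense3 by blast
    then show "(INF q\<in>{q::rat. x < ereal (of_rat q)}. ereal (of_rat q)) \<le> y"
      by (intro INF_lower2[of q]) auto
  qed
qed

lemma (in prob_space) AE_eq_const_if_prob_less_0_1:
  fixes f :: "'a \<Rightarrow> ereal"
  assumes f[measurable]: "f \<in> borel_measurable M"
    and zero_one: "\<And>t. \<P>(x in M. f x < t) = 0 \<or> \<P>(x in M. f x < t) = 1"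
  shows "\<exists>c. AE x in M. f x = c"
proof -
  define Q where "Q = {q::rat. \<P>(x in M. f x < ereal (of_rat q)) = 1}"
  have "AE x in M. \<forall>q. f x < ereal (of_rat q) \<longleftrightarrow> q \<in> Q"
  proof (subst AE_all_countable, intro allI)
    fix q :: rat
    show "AE x in M. f x < ereal (of_rat q) \<longleftrightarrow> q \<in> Q"
    proof (cases "q \<in> Q")
      case True
      then show ?thesis by (simp add: Q_def prob_Collect_eq_1)
    next
      case False
      then have "\<P>(x in M. f x < ereal (of_rat q)) = 0" using zero_one by (auto simp: Q_def)
      then show ?thesis using False by (simp add: prob_Collect_eq_0)
    qed
  qed
  then have "AE x in M. f x = (INF q\<in>Q. ereal (of_rat q))"
  proof (rule AE_mp, intro AE_I2 impI)
    fix x assume "\<forall>q. f x < ereal (of_rat q) \<longleftrightarrow> q \<in> Q"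
    then have "Q = {q. f x < ereal (of_rat q)}" by auto
    then show "f x = (INF q\<in>Q. ereal (of_rat q))" using ereal_eq_INF_rat_greater by simp
  qed
  then show ?thesis by blast
qed

lemma ergodic_map_AE_eq_const_if_decreasing:
  fixes f :: "'a \<Rightarrow> ereal"
  assumes "prob_space P" and erg: "ergodic_map P S" and f: "f \<in> borel_measurable P"
    and decreasing: "\<And>z. z \<in> space P \<Longrightarrow> f (S z) \<le> f z"
  shows "\<exists>c. AE z in P. f z = c"
proof -
  interpret prob_space P by fact
  have S: "S \<in> measurable P P"
    using erg by (simp add: ergodic_map_def measure_preserving_map_def)
  show ?thesis
  proof (rule AE_eq_const_if_prob_less_0_1[OF f])
    fix t
    show "\<P>(z in P. f z < t) = 0 \<or> \<P>(z in P. f z < t) = 1"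
    proof (rule ergodic_map_subinvariant_measure_0_1[OF erg])
      show "{z \<in> space P. f z < t} \<in> sets P" using f by measurable
      show "{z \<in> space P. f z < t} \<subseteq> S -` {z \<in> space P. f z < t}"
        using measurable_space[OF S] decreasing by (auto intro: le_less_trans)
    qed
  qed
qed

text \<open>
  The library measurability of \<open>dist\<close> needs the type class \<open>second_countable_topology\<close>;
  here separability is only a hypothesis, so \<open>dist\<close> is written through separately measurable
  maps as \<open>dist a b = inf\<^sub>k (dist a (e k) + dist (e k) b)\<close> over a countable dense sequence \<open>e\<close>.
\<close>
lemma borel_measurable_dist_separable:
  fixes f g :: "'b \<Rightarrow> 'a::metric_space"
  assumes sep: "separable_space (euclidean :: 'a topology)"
    and f: "f \<in> M \<rightarrow>\<^sub>M borel" and g: "g \<in> M \<rightarrow>\<^sub>M borel"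
  shows "(\<lambda>z. dist (f z) (g z)) \<in> borel_measurable M"
proof -
  obtain C :: "'a set" where C: "countable C" "closure C = UNIV"
    using sep unfolding separable_space_def by (metis euclidean_closure_of topspace_euclidean)
  then have "C \<noteq> {}" by (metis closure_empty empty_not_UNIV)
  define e where "e = from_nat_into C"
  have range_e: "range e = C"
    unfolding e_def by (rule range_from_nat_into[OF \<open>C \<noteq> {}\<close> C(1)])
  have dist_eq_INF: "ereal (dist a b) = (INF k. ereal (dist a (e k) + dist (e k) b))" for a b
  proof (rule antisym)
    show "ereal (dist a b) \<le> (INF k. ereal (dist a (e k) + dist (e k) b))"
      by (rule INF_greatest) (simp add: dist_triangle)
    show "(INF k. ereal (dist a (e k) + dist (e k) b)) \<le> ereal (dist a b)"
    proof (rule ereal_le_epsilon2)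
      fix \<epsilon> :: real assume "0 < \<epsilon>"
      then obtain c where "c \<in> C" "dist c a < \<epsilon> / 2"
        using C(2) closure_approachable[of a C] by (metis UNIV_I half_gt_zero)
      then obtain k where "dist (e k) a < \<epsilon> / 2" using range_e by auto
      then have "dist a (e k) + dist (e k) b \<le> dist a b + \<epsilon>"
        using dist_triangle[of "e k" b a] by (simp add: dist_commute)
      then show "(INF k. ereal (dist a (e k) + dist (e k) b)) \<le> ereal (dist a b) + ereal \<epsilon>"
        by (intro INF_lower2[of k]) auto
    qed
  qed
  have dist_to[measurable]: "(\<lambda>x. dist x c) \<in> borel_measurable borel" for c :: 'a
    by (intro borel_measurable_continuous_onI continuous_intros)
  have "(\<lambda>z. dist (f z) (e k)) \<in> borel_measurable M" "(\<lambda>z. dist (e k) (g z)) \<in> borel_measurable M" for k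
    using measurable_compose[OF f dist_to] measurable_compose[OF g dist_to, of "e k"]
    by (simp_all add: comp_def dist_commute[of "e k"])
  then have "(\<lambda>z. INF k. ereal (dist (f z) (e k) + dist (e k) (g z))) \<in> borel_measurable M"
    by measurable
  then have "(\<lambda>z. ereal (dist (f z) (g z))) \<in> borel_measurable M"
    by (simp add: dist_eq_INF)
  then show ?thesis by simp
qed

lemma borel_measurable_prox_gauge:
  fixes f g :: "'b \<Rightarrow> 'a::metric_space"
  assumes sep: "separable_space (euclidean :: 'a topology)"
    and T: "T \<in> borel_measurable borel"
    and f: "f \<in> M \<rightarrow>\<^sub>M borel" and g: "g \<in> M \<rightarrow>\<^sub>M borel"
  shows "(\<lambda>z. prox_gauge s T (f z) (g z)) \<in> borel_measurable M"
proof -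
  have [measurable]: "(\<lambda>z. dist ((T ^^ n) (f z)) ((T ^^ n) (g z))) \<in> borel_measurable M" for n
    using measurable_compose[OF f measurable_funpow[OF T]] measurable_compose[OF g measurable_funpow[OF T]]
    by (intro borel_measurable_dist_separable[OF sep]) (simp_all add: comp_def)
  show ?thesis unfolding prox_gauge_def by measurable
qed

lemma prox_gauge_shift_le_if_monotone:
  assumes "monotone_scale s"
  shows "prox_gauge s T (T x) (T y) \<le> prox_gauge s T x y"
proof -
  define d where "d n = dist ((T ^^ n) x) ((T ^^ n) y)" for n
  have "eventually (\<lambda>n. ereal (s n * d (Suc n)) \<le> ereal (s (Suc n) * d (Suc n))) sequentially"
    using assms unfolding monotone_scale_def
    by (rule eventually_mono) (simp add: d_def mult_right_mono)
  then have "liminf (\<lambda>n. ereal (s n * d (Suc n))) \<le> liminf (\<lambda>n. ereal (s (Suc n) * d (Suc n)))"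
    by (rule Liminf_mono)
  then show ?thesis
    using liminf_shift[of "\<lambda>n. ereal (s n * d n)"] by (simp add: prox_gauge_def d_def funpow_swap1)
qed

lemma prox_gauge_shift_eq_if_steady:
  assumes pos: "\<forall>\<^sub>F n in sequentially. 0 < s n" and steady: "steady_scale s"
  shows "prox_gauge s T (T x) (T y) = prox_gauge s T x y"
proof -
  define d where "d n = dist ((T ^^ n) x) ((T ^^ n) y)" for n
  have "(\<lambda>n. inverse (s (Suc n) / s n)) \<longlonglongrightarrow> inverse 1"
    using steady unfolding steady_scale_def by (intro tendsto_inverse) auto
  then have ratio: "(\<lambda>n. ereal (s n / s (Suc n))) \<longlonglongrightarrow> ereal 1"
    by (simp add: inverse_divide)
  have "eventually (\<lambda>n. 0 < s (Suc n)) sequentially"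
    using pos eventually_sequentially_Suc[of "\<lambda>n. 0 < s n"] by simp
  then have "liminf (\<lambda>n. ereal (s n * d (Suc n)))
      = liminf (\<lambda>n. ereal (s n / s (Suc n)) * ereal (s (Suc n) * d (Suc n)))"
    by (intro Liminf_eq) (auto elim: eventually_mono)
  also have "\<dots> = liminf (\<lambda>n. ereal (s (Suc n) * d (Suc n)))"
    using ereal_liminf_lim_mult[OF ratio, of "\<lambda>n. ereal (s (Suc n) * d (Suc n))"] by simp
  finally show ?thesis
    using liminf_shift[of "\<lambda>n. ereal (s n * d n)"] by (simp add: prox_gauge_def d_def funpow_swap1)
qed

lemma prox_gauge_AE_eq_const:
  fixes \<mu> :: "'a::metric_space measure" and T :: "'a \<Rightarrow> 'a"
  assumes sep: "separable_space (euclidean :: 'a topology)"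
    and sets_mu: "sets \<mu> = sets borel" and prob: "prob_space \<mu>"
    and T: "T \<in> borel_measurable borel" and wm: "weakly_mixing \<mu> T"
    and shift_le: "\<And>x y. prox_gauge s T (T x) (T y) \<le> prox_gauge s T x y"
  shows "\<exists>c. (AE z in \<mu> \<Otimes>\<^sub>M \<mu>. prox_gauge s T (fst z) (snd z) = c) \<and>
           distr (\<mu> \<Otimes>\<^sub>M \<mu>) borel (\<lambda>z. prox_gauge s T (fst z) (snd z)) = return borel c"
proof -
  interpret P: prob_space "\<mu> \<Otimes>\<^sub>M \<mu>" using prob prob by (rule prob_space_pair)
  have "fst \<in> \<mu> \<Otimes>\<^sub>M \<mu> \<rightarrow>\<^sub>M borel" "snd \<in> \<mu> \<Otimes>\<^sub>M \<mu> \<rightarrow>\<^sub>M borel"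
    using measurable_cong_sets[OF refl sets_mu] by auto
  then have \<psi>: "(\<lambda>z. prox_gauge s T (fst z) (snd z)) \<in> borel_measurable (\<mu> \<Otimes>\<^sub>M \<mu>)"
    by (rule borel_measurable_prox_gauge[OF sep T])
  obtain c where c: "AE z in \<mu> \<Otimes>\<^sub>M \<mu>. prox_gauge s T (fst z) (snd z) = c"
    using ergodic_map_AE_eq_const_if_decreasing[OF P.prob_space_axioms _ \<psi>] wm shift_le
    by (fastforce simp: weakly_mixing_def)
  have "distr (\<mu> \<Otimes>\<^sub>M \<mu>) borel (\<lambda>z. prox_gauge s T (fst z) (snd z))
      = distr (\<mu> \<Otimes>\<^sub>M \<mu>) borel (\<lambda>z. c)"
    using c \<psi> by (intro distr_cong_AE) auto
  then show ?thesis using c by auto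
qed

lemma monotone_scale_powr:
  assumes "0 \<le> \<alpha>"
  shows "monotone_scale (\<lambda>n. real n powr \<alpha>)"
  unfolding monotone_scale_def using assms by (intro always_eventually allI powr_mono2) auto

lemma prox_gauge_pow_nonneg: "0 \<le> prox_gauge_pow \<alpha> T x y"
  unfolding prox_gauge_pow_def prox_gauge_def by (intro Liminf_bounded always_eventually) simp

lemma prox_gauge_pow_mono:
  assumes "\<alpha> \<le> \<beta>"
  shows "prox_gauge_pow \<alpha> T x y \<le> prox_gauge_pow \<beta> T x y"
  unfolding prox_gauge_pow_def prox_gauge_def
proof (rule Liminf_mono, rule eventually_sequentiallyI[of 1])
  fix n :: nat assume "1 \<le> n"
  then have "real n powr \<alpha> \<le> real n powr \<beta>" using assms by (intro powr_mono) auto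
  then show "ereal (real n powr \<alpha> * dist ((T ^^ n) x) ((T ^^ n) y))
      \<le> ereal (real n powr \<beta> * dist ((T ^^ n) x) ((T ^^ n) y))"
    by (simp add: mult_right_mono)
qed

lemma ereal_liminf_mult_null_le_0:
  fixes u v :: "nat \<Rightarrow> ereal"
  assumes "u \<longlonglongrightarrow> 0" and "\<bar>liminf v\<bar> \<noteq> \<infinity>"
  shows "liminf (\<lambda>n. u n * v n) \<le> 0"
proof -
  obtain r where r: "strict_mono r" "(v \<circ> r) \<longlonglongrightarrow> liminf v"
    using liminf_subseq_lim by blast
  have "((\<lambda>n. u n * v n) \<circ> r) \<longlonglongrightarrow> 0 * liminf v"
    using tendsto_mult_ereal[OF LIMSEQ_subseq_LIMSEQ[OF assms(1) r(1)] r(2)] assms(2)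
    by (simp add: comp_def)
  then have "liminf ((\<lambda>n. u n * v n) \<circ> r) = 0"
    by (simp add: lim_imp_Liminf)
  then show ?thesis using liminf_subseq_mono[OF r(1), of "\<lambda>n. u n * v n"] by simp
qed

lemma prox_gauge_pow_eq_0_if_less:
  assumes "\<beta> < \<alpha>" and "prox_gauge_pow \<alpha> T x y \<noteq> \<infinity>"
  shows "prox_gauge_pow \<beta> T x y = 0"
proof -
  define X where "X = (\<lambda>n. ereal (real n powr \<alpha> * dist ((T ^^ n) x) ((T ^^ n) y)))"
  have "(\<lambda>n. real n powr (\<beta> - \<alpha>)) \<longlonglongrightarrow> 0"
    using assms(1) by (intro tendsto_neg_powr filterlim_real_sequentially) auto
  moreover have "\<bar>liminf X\<bar> \<noteq> \<infinity>"
    using assms(2) prox_gauge_pow_nonneg[of \<alpha> T x y]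
    by (simp add: X_def prox_gauge_pow_def prox_gauge_def)
  ultimately have "liminf (\<lambda>n. ereal (real n powr (\<beta> - \<alpha>)) * X n) \<le> 0"
    by (intro ereal_liminf_mult_null_le_0) (simp_all add: zero_ereal_def)
  moreover have "real n powr \<beta> = real n powr (\<beta> - \<alpha>) * real n powr \<alpha>" for n
    by (simp flip: powr_add)
  then have "prox_gauge_pow \<beta> T x y = liminf (\<lambda>n. ereal (real n powr (\<beta> - \<alpha>)) * X n)"
    by (simp add: X_def prox_gauge_pow_def prox_gauge_def mult.assoc)
  ultimately show ?thesis using prox_gauge_pow_nonneg[of \<beta> T x y] by simp
qed

lemma crit_exponent_nonneg: "0 \<le> crit_exponent M T"
  unfolding crit_exponent_def by (rule Sup_upper2[of "ereal 0"]) auto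

lemma AE_prox_gauge_pow_eq_0_below_crit_exponent:
  assumes "0 \<le> \<alpha>" and "ereal \<alpha> < crit_exponent M T"
  shows "AE z in M \<Otimes>\<^sub>M M. prox_gauge_pow \<alpha> T (fst z) (snd z) = 0"
proof -
  obtain \<beta> where "\<alpha> < \<beta>" and "AE z in M \<Otimes>\<^sub>M M. prox_gauge_pow \<beta> T (fst z) (snd z) = 0"
    using assms unfolding crit_exponent_def less_Sup_iff by auto
  then show ?thesis
  proof (elim eventually_mono)
    fix z :: "'a \<times> 'a" assume "prox_gauge_pow \<beta> T (fst z) (snd z) = 0"
    then show "prox_gauge_pow \<alpha> T (fst z) (snd z) = 0"
      using prox_gauge_pow_mono[of \<alpha> \<beta> T "fst z" "snd z"] prox_gauge_pow_nonneg[of \<alpha> T "fst z" "snd z"]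
        \<open>\<alpha> < \<beta>\<close> by simp
  qed
qed

lemma AE_prox_gauge_pow_eq_infinity_above_crit_exponent:
  assumes const: "\<And>\<alpha>. 0 < \<alpha> \<Longrightarrow> \<exists>c. AE z in M \<Otimes>\<^sub>M M. prox_gauge_pow \<alpha> T (fst z) (snd z) = c"
    and above: "crit_exponent M T < ereal \<alpha>"
  shows "AE z in M \<Otimes>\<^sub>M M. prox_gauge_pow \<alpha> T (fst z) (snd z) = \<infinity>"
proof -
  have "0 < \<alpha>" using order.strict_trans1[OF crit_exponent_nonneg above] by simp
  then obtain c where c: "AE z in M \<Otimes>\<^sub>M M. prox_gauge_pow \<alpha> T (fst z) (snd z) = c"
    using const by blast
  have "c = \<infinity>"
  proof (rule ccontr)
    assume "c \<noteq> \<infinity>"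
    obtain \<beta> where \<beta>: "crit_exponent M T < ereal \<beta>" "\<beta> < \<alpha>"
      using ereal_dense2[OF above] by auto
    then have "0 < \<beta>" using order.strict_trans1[OF crit_exponent_nonneg] by fastforce
    moreover have "AE z in M \<Otimes>\<^sub>M M. prox_gauge_pow \<beta> T (fst z) (snd z) = 0"
      using c \<open>c \<noteq> \<infinity>\<close> \<beta>(2) by (auto elim!: eventually_mono intro: prox_gauge_pow_eq_0_if_less)
    ultimately have "ereal \<beta> \<le> crit_exponent M T"
      unfolding crit_exponent_def by (intro Sup_upper) auto
    then show False using \<beta>(1) by simp
  qed
  then show ?thesis using c by simp
qed

theorem proposition3p9:
  fixes \<mu> :: "'a::metric_space measure" and T :: "'a \<Rightarrow> 'a" and s :: "nat \<Rightarrow> real"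
  assumes sep: "separable_space (euclidean :: 'a topology)"
    and sets_mu: "sets \<mu> = sets borel"
    and prob: "prob_space \<mu>"
    and T_meas: "T \<in> borel_measurable borel"
    and T_inv: "distr \<mu> \<mu> T = \<mu>"
    and wm: "weakly_mixing \<mu> T"
    and scale: "scale_sequence s"
    and mono_or_steady: "monotone_scale s \<or> steady_scale s"
  shows "(\<exists>c::ereal. (AE z in \<mu> \<Otimes>\<^sub>M \<mu>. prox_gauge s T (fst z) (snd z) = c) \<and>
            distr (\<mu> \<Otimes>\<^sub>M \<mu>) borel (\<lambda>z. prox_gauge s T (fst z) (snd z)) = return borel c)
      \<and> (\<forall>\<alpha>::real. 0 \<le> \<alpha> \<and> ereal \<alpha> < crit_exponent \<mu> T \<longrightarrow>
            (AE z in \<mu> \<Otimes>\<^sub>M \<mu>. prox_gauge_pow \<alpha> T (fst z) (snd z) = 0))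
      \<and> (\<forall>\<alpha>::real. crit_exponent \<mu> T < ereal \<alpha> \<longrightarrow>
            (AE z in \<mu> \<Otimes>\<^sub>M \<mu>. prox_gauge_pow \<alpha> T (fst z) (snd z) = \<infinity>))"
proof -
  note AE_const = prox_gauge_AE_eq_const[OF sep sets_mu prob T_meas wm]
  have "\<forall>\<^sub>F n in sequentially. 0 < s n"
    using scale unfolding scale_sequence_def by (intro eventually_sequentiallyI[of 1]) auto
  then have "prox_gauge s T (T x) (T y) \<le> prox_gauge s T x y" for x y
    using mono_or_steady
    by (metis prox_gauge_shift_le_if_monotone prox_gauge_shift_eq_if_steady order.refl)
  then have part_1: "\<exists>c. (AE z in \<mu> \<Otimes>\<^sub>M \<mu>. prox_gauge s T (fst z) (snd z) = c) \<and>
            distr (\<mu> \<Otimes>\<^sub>M \<mu>) borel (\<lambda>z. prox_gauge s T (fst z) (snd z)) = return borel c"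
    by (rule AE_const)
  have "\<exists>c. AE z in \<mu> \<Otimes>\<^sub>M \<mu>. prox_gauge_pow \<alpha> T (fst z) (snd z) = c" if "0 < \<alpha>" for \<alpha>
    using AE_const[OF prox_gauge_shift_le_if_monotone[OF monotone_scale_powr]] that
    unfolding prox_gauge_pow_def by (meson less_imp_le)
  then show ?thesis
    using part_1 AE_prox_gauge_pow_eq_0_below_crit_exponent
      AE_prox_gauge_pow_eq_infinity_above_crit_exponent by blast
qed

end
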